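(* $C_{\mathbb Z}=C^0_{\mathbb Z}=3$.
   Context: $\mathbb Z$ is regarded as the infinite path graph with vertex set $\mathbb Z$ and edges $\{j,j+1\}$, $j\in\mathbb Z$, with the graph distance $d(i,j)=|i-j|$. A measure $\mu$ is a weight function $\mu:\mathbb Z\to(0,\infty)$, with $\mu(A)=\sum_{v\in A}\mu(v)$. Closed balls are $B(x,r)=\{y:d(x,y)\le r\}$. The doubling constant of $\mu$ is $C_\mu=\sup\{\mu(B(x,2k+1))/\mu(B(x,k)): x\in \mathbb Z,\ k\in\{0,1,2,\dots\}\}$, and $\mu$ is doubling if $C_\mu<\infty$. $C_{\mathbb Z}=\inf\{C_\mu:\mu\text{ doubling}\}$; $C^0_\mu=\sup_{x}\mu(B(x,1))/\mu(x)$ and $C^0_{\mathbb Z}=\inf_\mu C^0_\mu$, the infimum over doubling measures. *)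

theory Defs
  imports "HOL-Library.Extended_Real"
begin

definition zball :: "int \<Rightarrow> nat \<Rightarrow> int set" where
  "zball x r = {y. \<bar>x - y\<bar> \<le> int r}"

definition zmeas :: "(int \<Rightarrow> real) \<Rightarrow> int set \<Rightarrow> real" where
  "zmeas \<mu> A = (\<Sum>v\<in>A. \<mu> v)"

definition is_measure :: "(int \<Rightarrow> real) \<Rightarrow> bool" where
  "is_measure \<mu> \<longleftrightarrow> (\<forall>v. \<mu> v > 0)"

definition doubling_const :: "(int \<Rightarrow> real) \<Rightarrow> ereal" where
  "doubling_const \<mu> =
     (SUP p\<in>(UNIV :: (int \<times> nat) set).
        ereal (zmeas \<mu> (zball (fst p) (2 * snd p + 1)) / zmeas \<mu> (zball (fst p) (snd p))))"

definition doubling :: "(int \<Rightarrow> real) \<Rightarrow> bool" where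
  "doubling \<mu> \<longleftrightarrow> is_measure \<mu> \<and> doubling_const \<mu> < \<infinity>"

definition C_Z :: ereal where
  "C_Z = (INF \<mu>\<in>{\<mu>. doubling \<mu>}. doubling_const \<mu>)"

definition C0 :: "(int \<Rightarrow> real) \<Rightarrow> ereal" where
  "C0 \<mu> = (SUP x\<in>(UNIV :: int set). ereal (zmeas \<mu> (zball x 1) / \<mu> x))"

definition C0_Z :: ereal where
  "C0_Z = (INF \<mu>\<in>{\<mu>. doubling \<mu>}. C0 \<mu>)"

end

theory Submission
  imports Defs
begin

text \<open>
  The counting measure has doubling constant 3: a ball of radius \<open>2k + 1\<close> has \<open>4k + 3\<close>
  points, at most three times the \<open>2k + 1\<close> points of the ball of radius \<open>k\<close>.
  Conversely, if \<open>C\<^sup>0\<^sub>\<mu> < 3\<close> then \<open>\<mu>(x - 1) + \<mu>(x + 1) < 2 \<mu>(x)\<close> for every \<open>x\<close>,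
  i.e. \<open>\<mu>\<close> is strictly concave on \<open>\<int>\<close>. But a concave function on \<open>\<int>\<close> that is bounded
  below is constant: a negative slope persists to the right and a positive one to the left,
  forcing the function to \<open>-\<infinity>\<close>. Since \<open>C\<^sup>0\<^sub>\<mu> \<le> C\<^sub>\<mu>\<close> (take \<open>k = 0\<close>), both infima are 3.
\<close>

lemma concave_int_bounded_below_mono:
  fixes f :: "int \<Rightarrow> real"
  assumes concave: "\<And>x. f (x - 1) + f (x + 1) \<le> 2 * f x"
    and bounded: "\<And>x. m \<le> f x"
  shows "f k \<le> f (k + 1)"
proof (rule ccontr)
  define s where "s = f (k + 1) - f k"
  assume "\<not> f k \<le> f (k + 1)"
  then have "s < 0" unfolding s_def by simp
  have slope: "f (k + int n + 1) - f (k + int n) \<le> s" for n :: nat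
  proof (induction n)
    case 0
    then show ?case by (simp add: s_def)
  next
    case (Suc n)
    then show ?case using concave[of "k + int n + 1"] by (smt (verit) of_nat_Suc)
  qed
  have decay: "f (k + int n) \<le> f k + real n * s" for n :: nat
  proof (induction n)
    case 0
    then show ?case by simp
  next
    case (Suc n)
    then show ?case using slope[of n] by (simp add: algebra_simps)
  qed
  obtain n :: nat where "f k - m < real n * (- s)"
    using \<open>s < 0\<close> ex_less_of_nat_mult[of "- s" "f k - m"] by auto
  then show False using decay[of n] bounded[of "k + int n"] by (simp add: algebra_simps)
qed

lemma concave_int_bounded_below_const:
  fixes f :: "int \<Rightarrow> real"
  assumes concave: "\<And>x. f (x - 1) + f (x + 1) \<le> 2 * f x"
    and bounded: "\<And>x. m \<le> f x"
  shows "f (k + 1) = f k"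
proof (rule antisym)
  show "f k \<le> f (k + 1)"
    using concave_int_bounded_below_mono assms by blast
  have "f (- (- k - 1)) \<le> f (- (- k - 1 + 1))"
  proof (rule concave_int_bounded_below_mono[where f = "\<lambda>x. f (- x)"])
    show "f (- (x - 1)) + f (- (x + 1)) \<le> 2 * f (- x)" for x
      using concave[of "- x"] by (smt (verit))
  qed (rule bounded)
  then show "f (k + 1) \<le> f k" by (simp add: add.commute)
qed

lemma zball_eq_atLeastAtMost: "zball x r = {x - int r .. x + int r}"
  unfolding zball_def by auto

lemma zball_0: "zball x 0 = {x}"
  unfolding zball_def by auto

lemma zmeas_zball_1: "zmeas \<mu> (zball x 1) = \<mu> (x - 1) + \<mu> x + \<mu> (x + 1)"
proof -
  have "zball x 1 = {x - 1, x, x + 1}"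
    unfolding zball_def by auto
  then show ?thesis unfolding zmeas_def by simp
qed

lemma three_le_C0:
  assumes "is_measure \<mu>"
  shows "3 \<le> C0 \<mu>"
proof (rule ccontr)
  assume "\<not> 3 \<le> C0 \<mu>"
  have pos: "\<mu> x > 0" for x
    using assms unfolding is_measure_def by simp
  have strictly_concave: "\<mu> (x - 1) + \<mu> (x + 1) < 2 * \<mu> x" for x
  proof -
    have "ereal (zmeas \<mu> (zball x 1) / \<mu> x) \<le> C0 \<mu>"
      unfolding C0_def by (rule SUP_upper) simp
    also have "C0 \<mu> < 3"
      using \<open>\<not> 3 \<le> C0 \<mu>\<close> by simp
    finally have "zmeas \<mu> (zball x 1) / \<mu> x < 3" by simp
    then show ?thesis
      using pos[of x] unfolding zmeas_zball_1 by (simp add: divide_less_eq)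
  qed
  have const: "\<mu> (x + 1) = \<mu> x" for x
    using strictly_concave pos by (intro concave_int_bounded_below_const) (auto intro: less_imp_le)
  show False
    using strictly_concave[of 0] const[of 0] const[of "- 1"] by simp
qed

lemma C0_le_doubling_const: "C0 \<mu> \<le> doubling_const \<mu>"
  unfolding C0_def doubling_const_def
proof (rule SUP_mono)
  fix x :: int
  show "\<exists>p\<in>UNIV. ereal (zmeas \<mu> (zball x 1) / \<mu> x)
    \<le> ereal (zmeas \<mu> (zball (fst p) (2 * snd p + 1)) / zmeas \<mu> (zball (fst p) (snd p)))"
    by (rule bexI[of _ "(x, 0)"]) (simp_all add: zball_0 zmeas_def)
qed

lemma zmeas_one_zball: "zmeas (\<lambda>_. 1) (zball x r) = 2 * real r + 1"
  unfolding zmeas_def zball_eq_atLeastAtMost by simp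

lemma doubling_const_one_le_3: "doubling_const (\<lambda>_. 1) \<le> 3"
  unfolding doubling_const_def
proof (rule SUP_least)
  fix p :: "int \<times> nat"
  have "(2 * real (2 * snd p + 1) + 1) / (2 * real (snd p) + 1) \<le> 3"
    by (simp add: divide_le_eq)
  then show "ereal (zmeas (\<lambda>_. 1) (zball (fst p) (2 * snd p + 1))
      / zmeas (\<lambda>_. 1) (zball (fst p) (snd p))) \<le> 3"
    unfolding zmeas_one_zball by simp
qed

lemma doubling_one: "doubling (\<lambda>_. 1)"
proof -
  have "doubling_const (\<lambda>_. 1) < \<infinity>"
    using doubling_const_one_le_3 by (rule order.strict_trans1) simp
  then show ?thesis unfolding doubling_def is_measure_def by simp
qed

lemma C0_Z_le_C_Z: "C0_Z \<le> C_Z"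
  unfolding C0_Z_def C_Z_def by (rule INF_mono') (rule C0_le_doubling_const)

theorem theorem4p2:
  shows "C_Z = 3 \<and> C0_Z = 3"
proof -
  have "3 \<le> C0_Z"
    unfolding C0_Z_def by (rule INF_greatest, rule three_le_C0) (simp add: doubling_def)
  moreover have "C_Z \<le> 3"
    unfolding C_Z_def using doubling_one doubling_const_one_le_3
    by (blast intro: INF_lower2)
  ultimately show ?thesis
    using C0_Z_le_C_Z by (meson order.antisym order.trans)
qed

end
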